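(* Let $n\ge 1$. As polynomials in the indeterminates $x$ and $y$ with coefficients in $\mathbb{Q}[\mathfrak{S}_n]$, \[\rho(x)\rho(y)=\rho(xy),\qquad \overline{\rho}(x)\overline{\rho}(y)=\overline{\rho}(xy),\qquad \overline{\rho}(x)\rho(y)=\overline{\rho}(xy),\qquad \rho(x)\overline{\rho}(y)=\rho(xy),\] where $\rho(x)=\sum_{\pi\in\mathfrak{S}_n}\Omega'(\pi;x/2)\,\pi$ and $\overline{\rho}(x)=\sum_{\pi\in\mathfrak{S}_n}\overline{\Omega}'(\pi;x/2)\,\pi$.
   Context: $\mathfrak{S}_n$ is the symmetric group on $[n]=\{1,\dots,n\}$, permutations are written as words $(\pi(1),\dots,\pi(n))$, and multiplication in the group algebra $\mathbb{Q}[\mathfrak{S}_n]$ is composition: $(\sigma\tau)(i)=\sigma(\tau(i))$. Let $Z$ be a finite totally ordered set each of whose elements is declared either "plus-type" or "minus-type". For $\pi\in\mathfrak{S}_n$ let $N(\pi;Z)$ be the number of sequences $(a_1,\dots,a_n)\in Z^n$ with $a_1\le a_2\le\dots\le a_n$ such that for every $s\in[n-1]$: if $\pi(s)<\pi(s+1)$ then $a_s<a_{s+1}$ or ($a_s=a_{s+1}$ and $a_s$ is plus-type); if $\pi(s)>\pi(s+1)$ then $a_s<a_{s+1}$ or ($a_s=a_{s+1}$ and $a_s$ is minus-type). For a positive integer $k$ define the enriched order polynomial $\Omega'(\pi;k)=N(\pi;Z)$ with $Z=\{\bar1<1<\bar2<2<\dots<\bar k<k\}$, and the exterior enriched order polynomial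 $\overline{\Omega}'(\pi;k)=N(\pi;Z)$ with $Z=\{0<\bar1<1<\bar2<2<\dots<\overline{k-1}<k-1<\bar k\}$; here the elements $0$ and $j$ are plus-type and the barred elements $\bar j$ are minus-type. Each of these is, as a function of the positive integer $k$, the restriction of a unique polynomial in $k$ with rational coefficients, denoted by the same symbol; this polynomial is evaluated at $x/2$ above. *)

theory Defs
  imports "HOL-Combinatorics.Permutations" "HOL-Computational_Algebra.Polynomial" "HOL-Library.FuncSet"
begin

text \<open>A totally ordered set Z with m elements is modelled by the indices 0 < 1 < ... < m-1,
  and typ j = True means that the j-th element is plus-type.\<close>

definition enriched_count :: "nat \<Rightarrow> (nat \<Rightarrow> nat) \<Rightarrow> nat \<Rightarrow> (nat \<Rightarrow> bool) \<Rightarrow> nat" where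
  "enriched_count n \<pi> m typ = card {a \<in> {1..n} \<rightarrow>\<^sub>E {..<m}.
      (\<forall>s\<in>{1..<n}. a s \<le> a (Suc s)) \<and>
      (\<forall>s\<in>{1..<n}. \<pi> s < \<pi> (Suc s) \<longrightarrow> (a s < a (Suc s) \<or> (a s = a (Suc s) \<and> typ (a s)))) \<and>
      (\<forall>s\<in>{1..<n}. \<pi> s > \<pi> (Suc s) \<longrightarrow> (a s < a (Suc s) \<or> (a s = a (Suc s) \<and> \<not> typ (a s))))}"

text \<open>Z = {1bar < 1 < ... < kbar < k}: index 2i-2 is ibar (minus), 2i-1 is i (plus).\<close>
definition enriched_order :: "nat \<Rightarrow> (nat \<Rightarrow> nat) \<Rightarrow> nat \<Rightarrow> nat" where
  "enriched_order n \<pi> k = enriched_count n \<pi> (2 * k) odd"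

text \<open>Z = {0 < 1bar < 1 < ... < (k-1)bar < k-1 < kbar}: index 0 is 0 (plus),
  2i-1 is ibar (minus), 2i is i (plus).\<close>
definition ext_enriched_order :: "nat \<Rightarrow> (nat \<Rightarrow> nat) \<Rightarrow> nat \<Rightarrow> nat" where
  "ext_enriched_order n \<pi> k = enriched_count n \<pi> (2 * k) even"

definition enriched_order_poly :: "nat \<Rightarrow> (nat \<Rightarrow> nat) \<Rightarrow> rat poly" where
  "enriched_order_poly n \<pi> =
     (THE p. \<forall>k::nat. k \<ge> 1 \<longrightarrow> poly p (of_nat k) = of_nat (enriched_order n \<pi> k))"

definition ext_enriched_order_poly :: "nat \<Rightarrow> (nat \<Rightarrow> nat) \<Rightarrow> rat poly" where
  "ext_enriched_order_poly n \<pi> =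
     (THE p. \<forall>k::nat. k \<ge> 1 \<longrightarrow> poly p (of_nat k) = of_nat (ext_enriched_order n \<pi> k))"

text \<open>Elements of Q[S_n] as coefficient functions, zero off S_n.\<close>
definition ga_mult :: "nat \<Rightarrow> ((nat \<Rightarrow> nat) \<Rightarrow> rat) \<Rightarrow> ((nat \<Rightarrow> nat) \<Rightarrow> rat) \<Rightarrow> (nat \<Rightarrow> nat) \<Rightarrow> rat" where
  "ga_mult n f g = (\<lambda>\<sigma>. \<Sum>\<alpha>\<in>{p. p permutes {1..n}}. \<Sum>\<beta>\<in>{p. p permutes {1..n}}.
       if \<alpha> \<circ> \<beta> = \<sigma> then f \<alpha> * g \<beta> else 0)"

definition rho :: "nat \<Rightarrow> rat \<Rightarrow> (nat \<Rightarrow> nat) \<Rightarrow> rat" where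
  "rho n x = (\<lambda>\<pi>. if \<pi> permutes {1..n} then poly (enriched_order_poly n \<pi>) (x / 2) else 0)"

definition rho_bar :: "nat \<Rightarrow> rat \<Rightarrow> (nat \<Rightarrow> nat) \<Rightarrow> rat" where
  "rho_bar n x = (\<lambda>\<pi>. if \<pi> permutes {1..n} then poly (ext_enriched_order_poly n \<pi>) (x / 2) else 0)"

end

theory Submission
  imports Defs "HOL-Library.Product_Lexorder"
begin

(* A word w in Z^n is sorted by exactly one permutation pi (stably, except that equal minus-type
  letters are put in reverse order), and Omega'(pi; Z) counts the words sorted by pi.  Order
  Z1 x Z2 lexicographically with the Z2-letter dominant, reversing the order of Z1 under a
  minus-type Z2-letter, and let (x, y) be plus-type iff x and y have the same type.  Combining
  a word sorted by alpha with one sorted by beta letterwise along alpha gives every word sorted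
  by alpha beta exactly once, so
    sum over alpha beta = sigma of Omega'(alpha; Z1) Omega'(beta; Z2) = Omega'(sigma; Z1 x Z2).
  For alternately typed Z1, Z2 of sizes 2k, 2l the product is alternately typed of size 4kl,
  starting with the type of the first letter of Z1.  This is the claimed identity at x = 2k,
  y = 2l, and both sides are polynomial in each variable.  Polynomiality itself comes from the
  case of an all-plus Z2 of size k, where Omega'(beta; Z2) = (k + asc beta choose n). *)

section \<open>Chains indexed by an interval, and permutations\<close>

definition stepwise :: "nat \<Rightarrow> ('a \<Rightarrow> 'a \<Rightarrow> bool) \<Rightarrow> (nat \<Rightarrow> 'a) \<Rightarrow> bool" where
  "stepwise n r f \<longleftrightarrow> (\<forall>s\<in>{1..<n}. r (f s) (f (Suc s)))"

lemma stepwise_trans: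
  assumes "stepwise n r f" "transp r" "1 \<le> s" "s < t" "t \<le> n"
  shows "r (f s) (f t)"
  using assms(4,5)
proof (induction t)
  case 0
  then show ?case by simp
next
  case (Suc t)
  have step: "r (f t) (f (Suc t))"
    using assms(1,3) Suc.prems by (simp add: stepwise_def)
  show ?case
  proof (cases "s = t")
    case True
    then show ?thesis using step by simp
  next
    case False
    then have "r (f s) (f t)" using Suc by simp
    then show ?thesis using step assms(2) by (blast dest: transpD)
  qed
qed

lemma stepwise_inj_on:
  assumes "stepwise n r f" "transp r" "irreflp r"
  shows "inj_on f {1..n}"
proof (rule inj_onI)
  fix s t assume "s \<in> {1..n}" "t \<in> {1..n}" "f s = f t"
  then show "s = t"
    using stepwise_trans[OF assms(1,2), of s t] stepwise_trans[OF assms(1,2), of t s] assms(3)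
    by (metis atLeastAtMost_iff irreflpD linorder_neqE_nat)
qed

lemma stepwise_rank:
  assumes "stepwise n r f" "transp r" "irreflp r" "s \<in> {1..n}"
  shows "card {y \<in> f ` {1..n}. r y (f s)} = s - 1"
proof -
  have "{y \<in> f ` {1..n}. r y (f s)} = f ` {1..<s}"
  proof (intro equalityI subsetI)
    fix y assume "y \<in> {y \<in> f ` {1..n}. r y (f s)}"
    then obtain t where t: "t \<in> {1..n}" "y = f t" "r (f t) (f s)" by auto
    have "t < s"
    proof (rule ccontr)
      assume "\<not> t < s"
      then consider "t = s" | "s < t" by linarith
      then show False
      proof cases
        case 1
        then show ?thesis using t(3) assms(3) by (simp add: irreflpD)
      next
        case 2
        then have "r (f s) (f t)" using stepwise_trans[OF assms(1,2)] assms(4) t(1) by auto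
        then show ?thesis using t(3) assms(2,3) by (metis irreflpD transpD)
      qed
    qed
    then show "y \<in> f ` {1..<s}" using t by auto
  next
    fix y assume "y \<in> f ` {1..<s}"
    then show "y \<in> {y \<in> f ` {1..n}. r y (f s)}"
      using stepwise_trans[OF assms(1,2)] assms(4) by auto
  qed
  moreover have "inj_on f {1..<s}"
    using assms(4) by (intro inj_on_subset[OF stepwise_inj_on[OF assms(1-3)]]) auto
  ultimately show ?thesis by (simp add: card_image)
qed

lemma stepwise_unique:
  assumes "stepwise n r f" "stepwise n r g" "transp r" "irreflp r"
    and "f ` {1..n} = g ` {1..n}" "s \<in> {1..n}"
  shows "f s = g s"
proof -
  obtain t where t: "t \<in> {1..n}" "f s = g t" using assms(5,6) by blast
  have "s - 1 = t - 1"
    using stepwise_rank[OF assms(1,3,4,6)] stepwise_rank[OF assms(2,3,4) t(1)] assms(5) t(2)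
    by simp
  then have "s = t" using assms(6) t(1) by auto
  then show ?thesis using t(2) by simp
qed

lemma stepwise_nth:
  assumes "sorted_wrt r xs"
  shows "stepwise (length xs) r (\<lambda>s. xs ! (s - 1))"
  unfolding stepwise_def
proof
  fix s assume "s \<in> {1..<length xs}"
  then show "r (xs ! (s - 1)) (xs ! (Suc s - 1))"
    using sorted_wrt_nth_less[OF assms, of "s - 1" s] by auto
qed

lemma permutes_of_distinct_list:
  assumes "distinct xs" "set xs = {1..length xs}"
  obtains \<pi> where "\<pi> permutes {1..length xs}" "\<And>s. s \<in> {1..length xs} \<Longrightarrow> \<pi> s = xs ! (s - 1)"
proof
  let ?ps = "zip [1..<Suc (length xs)] xs"
  have "map fst ?ps = [1..<Suc (length xs)]" "map snd ?ps = xs"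
    by (simp_all del: upt_Suc)
  then have ps: "list_permutes ?ps {1..length xs}"
    using assms by (intro list_permutesI) (simp_all add: atLeastLessThanSuc_atLeastAtMost del: upt_Suc)
  then show "permutation_of_list ?ps permutes {1..length xs}" by simp
  fix s assume "s \<in> {1..length xs}"
  then have "(s, xs ! (s - 1)) \<in> set ?ps"
    by (auto simp: set_zip simp del: upt_Suc intro!: exI[of _ "s - 1"])
  then show "permutation_of_list ?ps s = xs ! (s - 1)"
    by (rule permutation_of_list_unique[OF ps])
qed

lemma bij_betw_PiE_permute:
  assumes "\<pi> permutes A"
  shows "bij_betw (\<lambda>w. restrict (w \<circ> \<pi>) A) (A \<rightarrow>\<^sub>E B) (A \<rightarrow>\<^sub>E B)"
proof (rule bij_betwI[where g = "\<lambda>a. restrict (a \<circ> inv \<pi>) A"])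
  note img = permutes_in_image[OF assms] permutes_in_image[OF permutes_inv[OF assms]]
  note inverses = permutes_inverses[OF assms]
  show "(\<lambda>w. restrict (w \<circ> \<pi>) A) \<in> (A \<rightarrow>\<^sub>E B) \<rightarrow> (A \<rightarrow>\<^sub>E B)"
    "(\<lambda>a. restrict (a \<circ> inv \<pi>) A) \<in> (A \<rightarrow>\<^sub>E B) \<rightarrow> (A \<rightarrow>\<^sub>E B)"
    by (auto simp: PiE_iff img)
  show "restrict (restrict (w \<circ> \<pi>) A \<circ> inv \<pi>) A = w" if "w \<in> A \<rightarrow>\<^sub>E B" for w
  proof
    fix x
    show "restrict (restrict (w \<circ> \<pi>) A \<circ> inv \<pi>) A x = w x"
      using PiE_arb[OF that, of x] by (cases "x \<in> A") (simp_all add: img inverses)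
  qed
  show "restrict (restrict (a \<circ> inv \<pi>) A \<circ> \<pi>) A = a" if "a \<in> A \<rightarrow>\<^sub>E B" for a
  proof
    fix x
    show "restrict (restrict (a \<circ> inv \<pi>) A \<circ> \<pi>) A x = a x"
      using PiE_arb[OF that, of x] by (cases "x \<in> A") (simp_all add: img inverses)
  qed
qed

lemma bij_betw_Collect:
  assumes "bij_betw f X Y" "\<And>x. x \<in> X \<Longrightarrow> P x \<longleftrightarrow> Q (f x)"
  shows "bij_betw f {x \<in> X. P x} {y \<in> Y. Q y}"
  using assms unfolding bij_betw_def by (auto intro: inj_on_subset)

lemma sum_compose_eq_perm:
  assumes "finite A" "\<sigma> permutes A"
  shows "(\<Sum>\<alpha>\<in>{p. p permutes A}. \<Sum>\<beta>\<in>{p. p permutes A}. if \<alpha> \<circ> \<beta> = \<sigma> then h \<alpha> \<beta> else 0)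
       = (\<Sum>\<alpha>\<in>{p. p permutes A}. h \<alpha> (inv \<alpha> \<circ> \<sigma>))"
proof (rule sum.cong[OF refl])
  fix \<alpha> assume "\<alpha> \<in> {p. p permutes A}"
  then have \<alpha>: "\<alpha> permutes A" by simp
  have "\<alpha> \<circ> \<beta> = \<sigma> \<longleftrightarrow> \<beta> = inv \<alpha> \<circ> \<sigma>" for \<beta>
    by (metis comp_id id_comp o_assoc permutes_inv_o[OF \<alpha>])
  then show "(\<Sum>\<beta>\<in>{p. p permutes A}. if \<alpha> \<circ> \<beta> = \<sigma> then h \<alpha> \<beta> else 0) = h \<alpha> (inv \<alpha> \<circ> \<sigma>)"
    using permutes_compose[OF assms(2) permutes_inv[OF \<alpha>]] finite_permutations[OF assms(1)]
    by (simp add: sum.delta)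
qed

section \<open>Polynomial functions\<close>

definition poly_fun :: "('a::comm_ring_1 \<Rightarrow> 'a) \<Rightarrow> bool" where
  "poly_fun f \<longleftrightarrow> (\<exists>p. f = poly p)"

lemma poly_fun_const: "poly_fun (\<lambda>x. c)"
  unfolding poly_fun_def by (rule exI[of _ "[:c:]"]) (simp add: fun_eq_iff)

lemma poly_fun_id: "poly_fun (\<lambda>x. x)"
  unfolding poly_fun_def by (rule exI[of _ "[:0, 1:]"]) (simp add: fun_eq_iff)

lemma poly_fun_poly_comp:
  assumes "poly_fun g"
  shows "poly_fun (\<lambda>x. poly p (g x))"
proof -
  obtain q where "g = poly q"
    using assms unfolding poly_fun_def by blast
  then have "(\<lambda>x. poly p (g x)) = poly (pcompose p q)"
    by (simp add: fun_eq_iff poly_pcompose)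
  then show ?thesis
    unfolding poly_fun_def by blast
qed

lemma poly_fun_divide:
  fixes f :: "'a::field \<Rightarrow> 'a"
  assumes "poly_fun f"
  shows "poly_fun (\<lambda>x. f x / c)"
proof -
  obtain p where "f = poly p"
    using assms unfolding poly_fun_def by blast
  then have "(\<lambda>x. f x / c) = poly (smult (inverse c) p)"
    by (simp add: fun_eq_iff field_simps)
  then show ?thesis
    unfolding poly_fun_def by blast
qed

lemma poly_fun_diff:
  assumes "poly_fun f" "poly_fun g"
  shows "poly_fun (\<lambda>x. f x - g x)"
proof -
  obtain p q where "f = poly p" "g = poly q"
    using assms unfolding poly_fun_def by blast
  then have "(\<lambda>x. f x - g x) = poly (p - q)"
    by (simp add: fun_eq_iff)
  then show ?thesis
    unfolding poly_fun_def by blast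
qed

lemma poly_fun_mult:
  assumes "poly_fun f" "poly_fun g"
  shows "poly_fun (\<lambda>x. f x * g x)"
proof -
  obtain p q where "f = poly p" "g = poly q"
    using assms unfolding poly_fun_def by blast
  then have "(\<lambda>x. f x * g x) = poly (p * q)"
    by (simp add: fun_eq_iff)
  then show ?thesis
    unfolding poly_fun_def by blast
qed

lemma poly_fun_sum:
  assumes "\<And>a. a \<in> A \<Longrightarrow> poly_fun (f a)"
  shows "poly_fun (\<lambda>x. \<Sum>a\<in>A. f a x)"
proof -
  obtain p where "\<And>a. a \<in> A \<Longrightarrow> f a = poly (p a)"
    using assms unfolding poly_fun_def by metis
  then have "(\<lambda>x. \<Sum>a\<in>A. f a x) = poly (\<Sum>a\<in>A. p a)"
    by (simp add: fun_eq_iff poly_sum)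
  then show ?thesis
    unfolding poly_fun_def by blast
qed

lemma poly_fun_eq_0:
  fixes f :: "'a::idom \<Rightarrow> 'a"
  assumes "poly_fun f" "infinite S" "\<And>x. x \<in> S \<Longrightarrow> f x = 0"
  shows "f x = 0"
proof -
  obtain p where p: "f = poly p"
    using assms(1) unfolding poly_fun_def by blast
  have "p = 0"
  proof (rule ccontr)
    assume "p \<noteq> 0"
    then have "finite {x. poly p x = 0}"
      by (rule poly_roots_finite)
    moreover have "S \<subseteq> {x. poly p x = 0}"
      using assms(3) p by auto
    ultimately show False
      using assms(2) finite_subset by blast
  qed
  then show ?thesis using p by simp
qed

lemma poly_fun_eq_0_separately:
  fixes F :: "'a::idom \<Rightarrow> 'a \<Rightarrow> 'a"
  assumes "\<And>y. poly_fun (\<lambda>x. F x y)" "\<And>x. poly_fun (\<lambda>y. F x y)"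
    and "infinite S" "infinite T" "\<And>x y. x \<in> S \<Longrightarrow> y \<in> T \<Longrightarrow> F x y = 0"
  shows "F x y = 0"
proof -
  have "F x y' = 0" if "y' \<in> T" for y'
    using poly_fun_eq_0[OF assms(1) assms(3)] assms(5) that by blast
  then show ?thesis
    using poly_fun_eq_0[OF assms(2) assms(4)] by blast
qed

lemma infinite_of_nat_multiples:
  assumes "0 < c"
  shows "infinite ((\<lambda>k. of_nat (c * k) :: 'a::semiring_char_0) ` {1..})"
proof -
  have "inj_on (\<lambda>k. of_nat (c * k) :: 'a) {1..}"
    using assms by (intro inj_onI) (simp del: of_nat_mult)
  then show ?thesis
    by (simp add: finite_image_iff infinite_Ici)
qed

lemma poly_eqI_positive_nats:
  fixes p q :: "'a::{idom, ring_char_0} poly"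
  assumes "\<And>k. k \<ge> 1 \<Longrightarrow> poly p (of_nat k) = poly q (of_nat k)"
  shows "p = q"
proof -
  have "poly (p - q) x = 0" for x
  proof (rule poly_fun_eq_0[where f = "poly (p - q)" and S = "of_nat ` {1..}"])
    show "poly_fun (poly (p - q))"
      by (auto simp: poly_fun_def)
    show "infinite (of_nat ` {1..} :: 'a set)"
      using infinite_of_nat_multiples[of 1] by simp
  qed (use assms in auto)
  then show ?thesis
    by (metis eq_iff_diff_eq_0 poly_all_0_iff_0)
qed

section \<open>The sorting permutation of a typed word\<close>

definition position_key :: "(nat \<Rightarrow> bool) \<Rightarrow> (nat \<Rightarrow> nat) \<Rightarrow> nat \<Rightarrow> nat \<times> int" where
  "position_key typ w i = (w i, if typ (w i) then int i else - int i)"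

definition precedes :: "(nat \<Rightarrow> bool) \<Rightarrow> (nat \<Rightarrow> nat) \<Rightarrow> nat \<Rightarrow> nat \<Rightarrow> bool" where
  "precedes typ w i j \<longleftrightarrow> position_key typ w i < position_key typ w j"

definition sorts :: "nat \<Rightarrow> (nat \<Rightarrow> bool) \<Rightarrow> (nat \<Rightarrow> nat) \<Rightarrow> (nat \<Rightarrow> nat) \<Rightarrow> bool" where
  "sorts n typ w \<pi> \<longleftrightarrow> stepwise n (precedes typ w) \<pi>"

lemma precedes_iff:
  "precedes typ w i j \<longleftrightarrow> w i < w j \<or> (w i = w j \<and> (if typ (w i) then i < j else j < i))"
  by (auto simp: precedes_def position_key_def less_prod_def)

lemma transp_precedes: "transp (precedes typ w)"
  by (auto simp: precedes_def intro: transpI)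

lemma irreflp_precedes: "irreflp (precedes typ w)"
  by (simp add: precedes_def irreflpI)

lemma inj_position_key: "inj (position_key typ w)"
  by (rule injI) (auto simp: position_key_def split: if_splits)

lemma sorts_unique:
  assumes "\<pi> permutes {1..n}" "\<pi>' permutes {1..n}" "sorts n typ w \<pi>" "sorts n typ w \<pi>'"
  shows "\<pi> = \<pi>'"
proof
  fix s
  show "\<pi> s = \<pi>' s"
  proof (cases "s \<in> {1..n}")
    case True
    then show ?thesis
      using stepwise_unique[of n "precedes typ w" \<pi> \<pi>'] assms transp_precedes irreflp_precedes
      by (simp add: sorts_def permutes_image)
  next
    case False
    then show ?thesis using assms(1,2) by (simp add: permutes_not_in)
  qed
qed

lemma sorts_exists:
  obtains \<pi> where "\<pi> permutes {1..n}" "sorts n typ w \<pi>"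
proof -
  define xs where "xs = sort_key (position_key typ w) [1..<Suc n]"
  have xs: "distinct xs" "set xs = {1..length xs}" "length xs = n"
    by (auto simp: xs_def)
  have "sorted_wrt (<) (map (position_key typ w) xs)"
    using xs(1) inj_position_key
    by (simp add: strict_sorted_iff distinct_map xs_def inj_on_def inj_def)
  then have "sorted_wrt (precedes typ w) xs"
    by (simp add: sorted_wrt_map precedes_def[abs_def])
  then have "stepwise n (precedes typ w) (\<lambda>s. xs ! (s - 1))"
    using stepwise_nth xs(3) by blast
  moreover obtain \<pi> where "\<pi> permutes {1..n}" "\<And>s. s \<in> {1..n} \<Longrightarrow> \<pi> s = xs ! (s - 1)"
    using permutes_of_distinct_list[OF xs(1,2)] xs(3) by blast
  ultimately show ?thesis
    using that by (auto simp: sorts_def stepwise_def)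
qed

lemma precedes_iff_enriched:
  assumes "i \<noteq> j"
  shows "precedes typ w i j \<longleftrightarrow> w i \<le> w j \<and>
     (i < j \<longrightarrow> w i < w j \<or> (w i = w j \<and> typ (w i))) \<and>
     (j < i \<longrightarrow> w i < w j \<or> (w i = w j \<and> \<not> typ (w i)))"
  using assms by (auto simp: precedes_iff)

definition sorted_words :: "nat \<Rightarrow> nat \<Rightarrow> (nat \<Rightarrow> bool) \<Rightarrow> (nat \<Rightarrow> nat) \<Rightarrow> (nat \<Rightarrow> nat) set" where
  "sorted_words n m typ \<pi> = {w \<in> {1..n} \<rightarrow>\<^sub>E {..<m}. sorts n typ w \<pi>}"

lemma finite_sorted_words: "finite (sorted_words n m typ \<pi>)"
  unfolding sorted_words_def
  by (rule finite_subset[of _ "{1..n} \<rightarrow>\<^sub>E {..<m}"]) (auto intro: finite_PiE)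

lemma enriched_count_eq_card_sorted_words:
  assumes \<pi>: "\<pi> permutes {1..n}"
  shows "enriched_count n \<pi> m typ = card (sorted_words n m typ \<pi>)"
proof -
  have "\<pi> s \<noteq> \<pi> (Suc s)" for s
    using permutes_inj[OF \<pi>] by (metis injD n_not_Suc_n)
  then have "sorts n typ w \<pi> \<longleftrightarrow>
      (\<forall>s\<in>{1..<n}. a s \<le> a (Suc s)) \<and>
      (\<forall>s\<in>{1..<n}. \<pi> s < \<pi> (Suc s) \<longrightarrow> (a s < a (Suc s) \<or> (a s = a (Suc s) \<and> typ (a s)))) \<and>
      (\<forall>s\<in>{1..<n}. \<pi> s > \<pi> (Suc s) \<longrightarrow> (a s < a (Suc s) \<or> (a s = a (Suc s) \<and> \<not> typ (a s))))"
    if "a = restrict (w \<circ> \<pi>) {1..n}" for w a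
    by (auto simp: that sorts_def stepwise_def precedes_iff_enriched)
  then have "bij_betw (\<lambda>w. restrict (w \<circ> \<pi>) {1..n})
      (sorted_words n m typ \<pi>)
      {a \<in> {1..n} \<rightarrow>\<^sub>E {..<m}.
        (\<forall>s\<in>{1..<n}. a s \<le> a (Suc s)) \<and>
        (\<forall>s\<in>{1..<n}. \<pi> s < \<pi> (Suc s) \<longrightarrow> (a s < a (Suc s) \<or> (a s = a (Suc s) \<and> typ (a s)))) \<and>
        (\<forall>s\<in>{1..<n}. \<pi> s > \<pi> (Suc s) \<longrightarrow> (a s < a (Suc s) \<or> (a s = a (Suc s) \<and> \<not> typ (a s))))}"
    unfolding sorted_words_def by (intro bij_betw_Collect bij_betw_PiE_permute \<pi>) blast
  then show ?thesis
    unfolding enriched_count_def by (simp add: bij_betw_same_card)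
qed

section \<open>Twisted products of typed alphabets\<close>

(* The letter (x, y) of the product of {..<m} with a typed alphabet, encoded as a number: y is
  the major key, and the order of x is reversed when y has minus type. *)
definition twisted_pair :: "nat \<Rightarrow> (nat \<Rightarrow> bool) \<Rightarrow> nat \<Rightarrow> nat \<Rightarrow> nat" where
  "twisted_pair m t x y = y * m + (if t y then x else m - 1 - x)"

definition twisted_fst :: "nat \<Rightarrow> (nat \<Rightarrow> bool) \<Rightarrow> nat \<Rightarrow> nat" where
  "twisted_fst m t c = (if t (c div m) then c mod m else m - 1 - c mod m)"

lemma twisted_pair_div: "x < m \<Longrightarrow> twisted_pair m t x y div m = y"
  by (simp add: twisted_pair_def)

lemma twisted_pair_mod: "x < m \<Longrightarrow> twisted_pair m t x y mod m = (if t y then x else m - 1 - x)"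
  by (simp add: twisted_pair_def)

lemma twisted_pair_less_Suc: "x < m \<Longrightarrow> twisted_pair m t x y < Suc y * m"
  by (auto simp: twisted_pair_def)

lemma twisted_pair_less_snd:
  assumes "x < m" "y < y'"
  shows "twisted_pair m t x y < twisted_pair m t x' y'"
proof -
  have "twisted_pair m t x y < Suc y * m"
    using assms(1) by (rule twisted_pair_less_Suc)
  also have "\<dots> \<le> y' * m"
    using assms(2) by (intro mult_right_mono) auto
  also have "\<dots> \<le> twisted_pair m t x' y'"
    by (simp add: twisted_pair_def)
  finally show ?thesis .
qed

lemma twisted_pair_less_mult:
  assumes "x < m1" "y < m2"
  shows "twisted_pair m1 t x y < m1 * m2"
proof -
  have "twisted_pair m1 t x y < Suc y * m1"
    using assms(1) by (rule twisted_pair_less_Suc)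
  also have "\<dots> \<le> m2 * m1"
    using assms(2) by (intro mult_right_mono) auto
  finally show ?thesis by (simp add: mult.commute)
qed

lemma twisted_pair_less_fst:
  "x < m \<Longrightarrow> x' < m \<Longrightarrow>
    twisted_pair m t x y < twisted_pair m t x' y \<longleftrightarrow> (if t y then x < x' else x' < x)"
  by (auto simp: twisted_pair_def)

lemma twisted_pair_inject:
  assumes "x < m" "x' < m" "twisted_pair m t x y = twisted_pair m t x' y'"
  shows "x = x'" "y = y'"
proof -
  show "y = y'"
    using twisted_pair_div[OF assms(1)] twisted_pair_div[OF assms(2)] assms(3) by metis
  then have "(if t y then x else m - 1 - x) = (if t y then x' else m - 1 - x')"
    using twisted_pair_mod[OF assms(1)] twisted_pair_mod[OF assms(2)] assms(3) by metis
  then show "x = x'"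
    using assms(1,2) by (auto split: if_splits)
qed

lemma twisted_pair_twisted_fst:
  assumes "0 < m1" "c < m1 * m2"
  shows "twisted_fst m1 t c < m1" "c div m1 < m2" "twisted_pair m1 t (twisted_fst m1 t c) (c div m1) = c"
proof -
  have "c mod m1 < m1"
    using assms(1) by simp
  then show "twisted_fst m1 t c < m1" "twisted_pair m1 t (twisted_fst m1 t c) (c div m1) = c"
    using div_mult_mod_eq[of c m1] by (auto simp: twisted_fst_def twisted_pair_def)
  show "c div m1 < m2"
    using assms by (simp add: less_mult_imp_div_less mult.commute)
qed

lemma twisted_pair_parity:
  assumes "t \<in> {odd, even}" "x < 2 * k"
  shows "t (twisted_pair (2 * k) t' x y) \<longleftrightarrow> (t x \<longleftrightarrow> t' y)"
proof -
  have "even (2 * k - 1 - x) \<longleftrightarrow> odd x"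
    using assms(2) by presburger
  then show ?thesis
    using assms(1) by (auto simp: twisted_pair_def)
qed

lemma precedes_twisted_pair:
  assumes w: "w i = twisted_pair m t2 (u i) (v p)" "w j = twisted_pair m t2 (u j) (v q)"
    and u: "u i < m" "u j < m"
    and type_eq: "typ (w i) \<longleftrightarrow> (t1 (u i) \<longleftrightarrow> t2 (v p))"
    and v: "precedes t2 v p q"
    and u_less: "p < q \<Longrightarrow> precedes t1 u i j"
    and u_greater: "q < p \<Longrightarrow> precedes t1 u j i"
  shows "precedes typ w i j"
proof (cases "v p < v q")
  case True
  then show ?thesis
    using twisted_pair_less_snd[OF u(1) True] w by (simp add: precedes_iff)
next
  case False
  with v have vq: "v q = v p" and pq: "if t2 (v p) then p < q else q < p"
    by (auto simp: precedes_iff)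
  show ?thesis
  proof (cases "t2 (v p)")
    case True
    with pq u_less have "precedes t1 u i j" by simp
    then show ?thesis
      using twisted_pair_less_fst[OF u, of t2 "v p"] True type_eq w vq by (auto simp: precedes_iff)
  next
    case False
    with pq u_greater have "precedes t1 u j i" by simp
    then show ?thesis
      using twisted_pair_less_fst[OF u, of t2 "v p"] False type_eq w vq by (auto simp: precedes_iff)
  qed
qed

definition pair_word :: "nat \<Rightarrow> nat \<Rightarrow> (nat \<Rightarrow> bool) \<Rightarrow> (nat \<Rightarrow> nat) \<Rightarrow> (nat \<Rightarrow> nat) \<Rightarrow> (nat \<Rightarrow> nat) \<Rightarrow> nat \<Rightarrow> nat" where
  "pair_word n m t \<alpha> u v = restrict (\<lambda>i. twisted_pair m t (u i) (v (inv \<alpha> i))) {1..n}"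

lemma pair_word_PiE:
  assumes "\<alpha> permutes {1..n}" "u \<in> {1..n} \<rightarrow>\<^sub>E {..<m1}" "v \<in> {1..n} \<rightarrow>\<^sub>E {..<m2}"
  shows "pair_word n m1 t \<alpha> u v \<in> {1..n} \<rightarrow>\<^sub>E {..<m1 * m2}"
  using assms permutes_in_image[OF permutes_inv[OF assms(1)]]
  by (auto simp: pair_word_def intro!: twisted_pair_less_mult)

context
  fixes n m1 m2 :: nat and t1 t2 t :: "nat \<Rightarrow> bool"
  assumes m1_pos: "0 < m1"
    and type_twisted_pair:
      "\<And>x y. x < m1 \<Longrightarrow> y < m2 \<Longrightarrow> t (twisted_pair m1 t2 x y) \<longleftrightarrow> (t1 x \<longleftrightarrow> t2 y)"
begin

lemma pair_word_sorts:
  assumes \<alpha>: "\<alpha> permutes {1..n}" and \<beta>: "\<beta> permutes {1..n}"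
    and u: "u \<in> {1..n} \<rightarrow>\<^sub>E {..<m1}" "sorts n t1 u \<alpha>"
    and v: "v \<in> {1..n} \<rightarrow>\<^sub>E {..<m2}" "sorts n t2 v \<beta>"
  shows "sorts n t (pair_word n m1 t2 \<alpha> u v) (\<alpha> \<circ> \<beta>)"
  unfolding sorts_def stepwise_def
proof
  fix s assume s: "s \<in> {1..<n}"
  define p q where "p = \<beta> s" and "q = \<beta> (Suc s)"
  have pq: "p \<in> {1..n}" "q \<in> {1..n}" "\<alpha> p \<in> {1..n}" "\<alpha> q \<in> {1..n}"
    using s permutes_in_image[OF \<beta>] permutes_in_image[OF \<alpha>] by (auto simp: p_def q_def)
  have inv: "inv \<alpha> (\<alpha> p) = p" "inv \<alpha> (\<alpha> q) = q"
    using permutes_inverses(2)[OF \<alpha>] by auto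
  let ?w = "pair_word n m1 t2 \<alpha> u v"
  have w: "?w (\<alpha> p) = twisted_pair m1 t2 (u (\<alpha> p)) (v p)"
    "?w (\<alpha> q) = twisted_pair m1 t2 (u (\<alpha> q)) (v q)"
    using pq inv by (simp_all add: pair_word_def)
  have ub: "u (\<alpha> p) < m1" "u (\<alpha> q) < m1" and vb: "v p < m2"
    using u(1) v(1) pq by auto
  have type_eq: "t (?w (\<alpha> p)) \<longleftrightarrow> (t1 (u (\<alpha> p)) \<longleftrightarrow> t2 (v p))"
    using type_twisted_pair[OF ub(1) vb] w(1) by simp
  have "precedes t2 v p q"
    using v(2) s by (simp add: sorts_def stepwise_def p_def q_def)
  moreover have "precedes t1 u (\<alpha> p) (\<alpha> q)" if "p < q"
    using stepwise_trans[OF u(2)[unfolded sorts_def] transp_precedes] that pq by auto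
  moreover have "precedes t1 u (\<alpha> q) (\<alpha> p)" if "q < p"
    using stepwise_trans[OF u(2)[unfolded sorts_def] transp_precedes] that pq by auto
  ultimately have "precedes t ?w (\<alpha> p) (\<alpha> q)"
    by (rule precedes_twisted_pair[where w = ?w and i = "\<alpha> p" and j = "\<alpha> q" and u = u and v = v
        and p = p and q = q and ?typ = t and ?t1.0 = t1 and ?t2.0 = t2 and m = m1, OF w ub type_eq])
  then show "precedes t ?w ((\<alpha> \<circ> \<beta>) s) ((\<alpha> \<circ> \<beta>) (Suc s))"
    by (simp add: p_def q_def)
qed

lemma pair_word_inject:
  assumes \<alpha>: "\<alpha> permutes {1..n}" "\<alpha>' permutes {1..n}"
    and u: "u \<in> {1..n} \<rightarrow>\<^sub>E {..<m1}" "u' \<in> {1..n} \<rightarrow>\<^sub>E {..<m1}"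
    and sorts: "sorts n t1 u \<alpha>" "sorts n t1 u' \<alpha>'"
    and v: "v \<in> {1..n} \<rightarrow>\<^sub>E {..<m2}" "v' \<in> {1..n} \<rightarrow>\<^sub>E {..<m2}"
    and eq: "pair_word n m1 t2 \<alpha> u v = pair_word n m1 t2 \<alpha>' u' v'"
  shows "\<alpha> = \<alpha>' \<and> u = u' \<and> v = v'"
proof -
  have letters: "u i = u' i \<and> v (inv \<alpha> i) = v' (inv \<alpha>' i)" if "i \<in> {1..n}" for i
  proof -
    have bounds: "u i < m1" "u' i < m1"
      using u that by auto
    have "twisted_pair m1 t2 (u i) (v (inv \<alpha> i)) = twisted_pair m1 t2 (u' i) (v' (inv \<alpha>' i))"
      using fun_cong[OF eq, of i] that by (simp add: pair_word_def)
    from twisted_pair_inject[OF bounds this] show ?thesis by simp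
  qed
  then have "u = u'"
    using u by (blast intro: PiE_ext)
  then have "\<alpha> = \<alpha>'"
    using sorts_unique[OF \<alpha> sorts(1)] sorts(2) by simp
  have "v j = v' j" if "j \<in> {1..n}" for j
    using letters[of "\<alpha> j"] that permutes_in_image[OF \<alpha>(1)] permutes_inverses(2)[OF \<alpha>(1)] \<open>\<alpha> = \<alpha>'\<close>
    by simp
  then have "v = v'"
    using v by (blast intro: PiE_ext)
  with \<open>u = u'\<close> \<open>\<alpha> = \<alpha>'\<close> show ?thesis by simp
qed

lemma pair_word_decode:
  assumes \<alpha>: "\<alpha> permutes {1..n}" and w: "w \<in> {1..n} \<rightarrow>\<^sub>E {..<m1 * m2}"
  shows "restrict (\<lambda>j. w (\<alpha> j) div m1) {1..n} \<in> {1..n} \<rightarrow>\<^sub>E {..<m2}"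
    and "pair_word n m1 t2 \<alpha> (restrict (\<lambda>i. twisted_fst m1 t2 (w i)) {1..n})
      (restrict (\<lambda>j. w (\<alpha> j) div m1) {1..n}) = w"
proof -
  note decode = twisted_pair_twisted_fst[OF m1_pos]
  have \<alpha>_in: "\<alpha> j \<in> {1..n} \<longleftrightarrow> j \<in> {1..n}" "inv \<alpha> j \<in> {1..n} \<longleftrightarrow> j \<in> {1..n}" for j
    using permutes_in_image[OF \<alpha>] permutes_in_image[OF permutes_inv[OF \<alpha>]] by auto
  have "w (\<alpha> j) div m1 < m2" if "j \<in> {1..n}" for j
  proof -
    have "w (\<alpha> j) < m1 * m2"
      using w that \<alpha>_in(1) by auto
    then show ?thesis by (rule decode(2))
  qed
  then show "restrict (\<lambda>j. w (\<alpha> j) div m1) {1..n} \<in> {1..n} \<rightarrow>\<^sub>E {..<m2}"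
    by auto
  show "pair_word n m1 t2 \<alpha> (restrict (\<lambda>i. twisted_fst m1 t2 (w i)) {1..n})
      (restrict (\<lambda>j. w (\<alpha> j) div m1) {1..n}) = w"
  proof
    fix i
    show "pair_word n m1 t2 \<alpha> (restrict (\<lambda>i. twisted_fst m1 t2 (w i)) {1..n})
      (restrict (\<lambda>j. w (\<alpha> j) div m1) {1..n}) i = w i"
    proof (cases "i \<in> {1..n}")
      case True
      then have "w i < m1 * m2"
        using w by auto
      then show ?thesis
        using True \<alpha>_in decode(3) permutes_inverses(1)[OF \<alpha>] by (simp add: pair_word_def)
    next
      case False
      then show ?thesis
        using PiE_arb[OF w False] by (auto simp: pair_word_def)
    qed
  qed
qed

lemma pair_word_surj:
  assumes \<sigma>: "\<sigma> permutes {1..n}"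
    and w: "w \<in> {1..n} \<rightarrow>\<^sub>E {..<m1 * m2}" "sorts n t w \<sigma>"
  obtains \<alpha> u v where "\<alpha> permutes {1..n}"
    "u \<in> {1..n} \<rightarrow>\<^sub>E {..<m1}" "sorts n t1 u \<alpha>"
    "v \<in> {1..n} \<rightarrow>\<^sub>E {..<m2}" "sorts n t2 v (inv \<alpha> \<circ> \<sigma>)"
    "pair_word n m1 t2 \<alpha> u v = w"
proof -
  define u where "u = restrict (\<lambda>i. twisted_fst m1 t2 (w i)) {1..n}"
  have u: "u \<in> {1..n} \<rightarrow>\<^sub>E {..<m1}"
    using w(1) twisted_pair_twisted_fst(1)[OF m1_pos] by (auto simp: u_def)
  obtain \<alpha> where \<alpha>: "\<alpha> permutes {1..n}" "sorts n t1 u \<alpha>"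
    using sorts_exists by blast
  define v where "v = restrict (\<lambda>j. w (\<alpha> j) div m1) {1..n}"
  have v: "v \<in> {1..n} \<rightarrow>\<^sub>E {..<m2}" and word: "pair_word n m1 t2 \<alpha> u v = w"
    using pair_word_decode[OF \<alpha>(1) w(1)] by (simp_all add: u_def v_def)
  obtain \<beta> where \<beta>: "\<beta> permutes {1..n}" "sorts n t2 v \<beta>"
    using sorts_exists by blast
  have "sorts n t w (\<alpha> \<circ> \<beta>)"
    using pair_word_sorts[OF \<alpha>(1) \<beta>(1) u \<alpha>(2) v \<beta>(2)] word by simp
  then have "\<alpha> \<circ> \<beta> = \<sigma>"
    using sorts_unique[OF permutes_compose[OF \<beta>(1) \<alpha>(1)] \<sigma>] w(2) by blast
  then have "\<beta> = inv \<alpha> \<circ> \<sigma>"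
    by (metis o_assoc permutes_inv_o(2)[OF \<alpha>(1)] id_o)
  then show ?thesis
    using that \<alpha> u v \<beta>(2) word by blast
qed

lemma bij_betw_pair_word:
  assumes \<sigma>: "\<sigma> permutes {1..n}"
  shows "bij_betw (\<lambda>(\<alpha>, u, v). pair_word n m1 t2 \<alpha> u v)
    (SIGMA \<alpha>:{p. p permutes {1..n}}. sorted_words n m1 t1 \<alpha> \<times> sorted_words n m2 t2 (inv \<alpha> \<circ> \<sigma>))
    (sorted_words n (m1 * m2) t \<sigma>)"
  (is "bij_betw ?f ?S _")
proof (rule bij_betw_imageI)
  show "inj_on ?f ?S"
    by (rule inj_onI) (use pair_word_inject in \<open>auto simp: sorted_words_def\<close>)
  show "?f ` ?S = sorted_words n (m1 * m2) t \<sigma>"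
  proof (intro equalityI subsetI)
    fix w assume "w \<in> ?f ` ?S"
    then obtain \<alpha> u v where \<alpha>: "\<alpha> permutes {1..n}" and "u \<in> sorted_words n m1 t1 \<alpha>"
      and "v \<in> sorted_words n m2 t2 (inv \<alpha> \<circ> \<sigma>)" and w: "w = pair_word n m1 t2 \<alpha> u v"
      by auto
    then show "w \<in> sorted_words n (m1 * m2) t \<sigma>"
      using pair_word_PiE pair_word_sorts[of \<alpha> "inv \<alpha> \<circ> \<sigma>" u v] permutes_compose[OF \<sigma> permutes_inv[OF \<alpha>]]
      by (simp add: sorted_words_def o_assoc permutes_inv_o[OF \<alpha>])
  next
    fix w assume "w \<in> sorted_words n (m1 * m2) t \<sigma>"
    then have "w \<in> {1..n} \<rightarrow>\<^sub>E {..<m1 * m2}" "sorts n t w \<sigma>"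
      by (simp_all add: sorted_words_def)
    then obtain \<alpha> u v where "\<alpha> permutes {1..n}" "u \<in> {1..n} \<rightarrow>\<^sub>E {..<m1}" "sorts n t1 u \<alpha>"
      "v \<in> {1..n} \<rightarrow>\<^sub>E {..<m2}" "sorts n t2 v (inv \<alpha> \<circ> \<sigma>)" "pair_word n m1 t2 \<alpha> u v = w"
      by (rule pair_word_surj[OF \<sigma>])
    then show "w \<in> ?f ` ?S"
      by (intro rev_image_eqI[of "(\<alpha>, u, v)"]) (auto simp: sorted_words_def)
  qed
qed

lemma convolution_enriched_count:
  assumes \<sigma>: "\<sigma> permutes {1..n}"
  shows "(\<Sum>\<alpha>\<in>{p. p permutes {1..n}}. \<Sum>\<beta>\<in>{p. p permutes {1..n}}.
           if \<alpha> \<circ> \<beta> = \<sigma> then enriched_count n \<alpha> m1 t1 * enriched_count n \<beta> m2 t2 else 0)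
         = enriched_count n \<sigma> (m1 * m2) t"
proof -
  let ?P = "{p. p permutes {1..n}}"
  have "(\<Sum>\<alpha>\<in>?P. \<Sum>\<beta>\<in>?P. if \<alpha> \<circ> \<beta> = \<sigma> then enriched_count n \<alpha> m1 t1 * enriched_count n \<beta> m2 t2 else 0)
      = (\<Sum>\<alpha>\<in>?P. card (sorted_words n m1 t1 \<alpha> \<times> sorted_words n m2 t2 (inv \<alpha> \<circ> \<sigma>)))"
    unfolding sum_compose_eq_perm[OF finite_atLeastAtMost \<sigma>]
    using permutes_compose[OF \<sigma> permutes_inv]
    by (intro sum.cong refl) (simp add: enriched_count_eq_card_sorted_words card_cartesian_product)
  also have "\<dots> = card (SIGMA \<alpha>:?P. sorted_words n m1 t1 \<alpha> \<times> sorted_words n m2 t2 (inv \<alpha> \<circ> \<sigma>))"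
    by (rule card_SigmaI[symmetric]) (simp_all add: finite_permutations finite_sorted_words)
  also have "\<dots> = card (sorted_words n (m1 * m2) t \<sigma>)"
    by (rule bij_betw_same_card[OF bij_betw_pair_word[OF \<sigma>]])
  also have "\<dots> = enriched_count n \<sigma> (m1 * m2) t"
    by (simp add: enriched_count_eq_card_sorted_words[OF \<sigma>])
  finally show ?thesis .
qed

end

section \<open>Polynomiality of the enriched order polynomials\<close>

definition ascents_before :: "(nat \<Rightarrow> nat) \<Rightarrow> nat \<Rightarrow> nat" where
  "ascents_before \<beta> s = card {r \<in> {1..<s}. \<beta> r < \<beta> (Suc r)}"

lemma ascents_before_Suc:
  assumes "1 \<le> s"
  shows "ascents_before \<beta> (Suc s) = ascents_before \<beta> s + (if \<beta> s < \<beta> (Suc s) then 1 else 0)"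
proof -
  have "{r \<in> {1..<Suc s}. \<beta> r < \<beta> (Suc r)} =
      (if \<beta> s < \<beta> (Suc s) then insert s {r \<in> {1..<s}. \<beta> r < \<beta> (Suc r)}
       else {r \<in> {1..<s}. \<beta> r < \<beta> (Suc r)})"
    using assms by (auto simp: less_Suc_eq)
  then show ?thesis by (simp add: ascents_before_def)
qed

lemma ascents_before_mono: "s \<le> s' \<Longrightarrow> ascents_before \<beta> s \<le> ascents_before \<beta> s'"
  unfolding ascents_before_def by (rule card_mono) auto

definition increasing_words :: "nat \<Rightarrow> nat \<Rightarrow> (nat \<Rightarrow> nat) set" where
  "increasing_words n N = {b \<in> {1..n} \<rightarrow>\<^sub>E {..<N}. stepwise n (<) b}"

lemma increasing_word_of_set:
  assumes "B \<subseteq> {..<N}" "card B = n"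
  obtains b where "b \<in> increasing_words n N" "b ` {1..n} = B"
proof
  have "finite B" using assms(1) finite_subset by blast
  define xs where "xs = sorted_list_of_set B"
  have xs: "sorted_wrt (<) xs" "set xs = B" "length xs = n"
    using \<open>finite B\<close> assms(2) by (simp_all add: xs_def)
  define b where "b = restrict (\<lambda>s. xs ! (s - 1)) {1..n}"
  have "(\<lambda>s. xs ! (s - 1)) ` {1..n} = set xs"
  proof (intro equalityI subsetI)
    fix y assume "y \<in> (\<lambda>s. xs ! (s - 1)) ` {1..n}"
    then show "y \<in> set xs" using xs(3) by auto
  next
    fix y assume "y \<in> set xs"
    then obtain i where "i < n" "y = xs ! i"
      using xs(3) by (auto simp: in_set_conv_nth)
    then show "y \<in> (\<lambda>s. xs ! (s - 1)) ` {1..n}"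
      by (intro image_eqI[of _ _ "Suc i"]) auto
  qed
  then show image: "b ` {1..n} = B"
    using xs(2) by (simp add: b_def)
  have "stepwise n (<) b"
    using stepwise_nth[OF xs(1)] xs(3) by (simp add: stepwise_def b_def)
  moreover have "b \<in> {1..n} \<rightarrow>\<^sub>E {..<N}"
    using image assms(1) by (auto simp: b_def)
  ultimately show "b \<in> increasing_words n N"
    by (simp add: increasing_words_def)
qed

lemma card_increasing_words: "card (increasing_words n N) = N choose n"
proof -
  let ?img = "\<lambda>b. b ` {1..n}"
  have "inj_on ?img (increasing_words n N)"
  proof (rule inj_onI)
    fix b b' assume b: "b \<in> increasing_words n N" "b' \<in> increasing_words n N" "?img b = ?img b'"
    then have "b s = b' s" if "s \<in> {1..n}" for s
      using stepwise_unique[of n "(<)" b b'] that by (simp add: increasing_words_def)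
    moreover have "b \<in> {1..n} \<rightarrow>\<^sub>E {..<N}" "b' \<in> {1..n} \<rightarrow>\<^sub>E {..<N}"
      using b by (simp_all add: increasing_words_def)
    ultimately show "b = b'"
      using PiE_ext by metis
  qed
  moreover have "?img ` increasing_words n N = {B. B \<subseteq> {..<N} \<and> card B = n}"
  proof (intro equalityI subsetI)
    fix B assume "B \<in> ?img ` increasing_words n N"
    then obtain b where b: "b \<in> increasing_words n N" "B = b ` {1..n}" by blast
    then have "inj_on b {1..n}"
      by (intro stepwise_inj_on[of n "(<)"]) (simp_all add: increasing_words_def)
    then show "B \<in> {B. B \<subseteq> {..<N} \<and> card B = n}"
      using b by (auto simp: increasing_words_def card_image)
  next
    fix B assume "B \<in> {B. B \<subseteq> {..<N} \<and> card B = n}"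
    then have "B \<subseteq> {..<N}" "card B = n" by auto
    then obtain b where "b \<in> increasing_words n N" "?img b = B"
      by (rule increasing_word_of_set)
    then show "B \<in> ?img ` increasing_words n N"
      by blast
  qed
  ultimately have "bij_betw ?img (increasing_words n N) {B. B \<subseteq> {..<N} \<and> card B = n}"
    by (rule bij_betw_imageI)
  then show ?thesis
    using n_subsets[of "{..<N}" n] by (simp add: bij_betw_same_card)
qed

lemma ascents_before_le:
  assumes "b \<in> increasing_words n N" "s \<in> {1..n}"
  shows "ascents_before \<beta> s \<le> b s"
  using assms(2)
proof (induction s)
  case (Suc s)
  show ?case
  proof (cases "s = 0")
    case False
    then have "ascents_before \<beta> s \<le> b s" "b s < b (Suc s)"
      using Suc assms(1) by (auto simp: increasing_words_def stepwise_def)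
    then show ?thesis
      using ascents_before_Suc[of s \<beta>] False by auto
  qed (simp add: ascents_before_def)
qed simp

definition descent_strict_words :: "nat \<Rightarrow> (nat \<Rightarrow> nat) \<Rightarrow> nat \<Rightarrow> (nat \<Rightarrow> nat) set" where
  "descent_strict_words n \<beta> k = {a \<in> {1..n} \<rightarrow>\<^sub>E {..<k}.
     \<forall>s\<in>{1..<n}. a s \<le> a (Suc s) \<and> (\<beta> (Suc s) < \<beta> s \<longrightarrow> a s < a (Suc s))}"

lemma enriched_count_all_plus_eq_card:
  "enriched_count n \<beta> k (\<lambda>_. True) = card (descent_strict_words n \<beta> k)"
  unfolding enriched_count_def descent_strict_words_def by (rule arg_cong[where f = card]) auto

lemma add_ascents_in_increasing_words:
  assumes \<beta>: "\<beta> permutes {1..n}" and a: "a \<in> descent_strict_words n \<beta> k"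
  shows "restrict (\<lambda>s. a s + ascents_before \<beta> s) {1..n} \<in> increasing_words n (k + ascents_before \<beta> n)"
proof -
  have "a s + ascents_before \<beta> s < k + ascents_before \<beta> n" if "s \<in> {1..n}" for s
    using a that ascents_before_mono[of s n \<beta>] by (force simp: descent_strict_words_def PiE_iff)
  moreover have "a s + ascents_before \<beta> s < a (Suc s) + ascents_before \<beta> (Suc s)"
    if "s \<in> {1..<n}" for s
  proof -
    have "\<beta> s \<noteq> \<beta> (Suc s)"
      using permutes_inj[OF \<beta>] by (metis injD n_not_Suc_n)
    moreover have "a s \<le> a (Suc s)" "\<beta> (Suc s) < \<beta> s \<longrightarrow> a s < a (Suc s)"
      using a that by (auto simp: descent_strict_words_def)
    ultimately show ?thesis
      using that ascents_before_Suc[of s \<beta>] by (auto split: if_splits)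
  qed
  ultimately show ?thesis
    by (auto simp: increasing_words_def stepwise_def)
qed

lemma sub_ascents_in_descent_strict_words:
  assumes b: "b \<in> increasing_words n (k + ascents_before \<beta> n)"
  shows "restrict (\<lambda>s. b s - ascents_before \<beta> s) {1..n} \<in> descent_strict_words n \<beta> k"
proof -
  note ge = ascents_before_le[OF b, of _ \<beta>]
  have step: "b s - ascents_before \<beta> s \<le> b (Suc s) - ascents_before \<beta> (Suc s) \<and>
      (\<beta> (Suc s) < \<beta> s \<longrightarrow> b s - ascents_before \<beta> s < b (Suc s) - ascents_before \<beta> (Suc s))"
    if "s \<in> {1..<n}" for s
  proof -
    have "b s < b (Suc s)"
      using b that by (auto simp: increasing_words_def stepwise_def)
    then show ?thesis
      using that ge[of s] ge[of "Suc s"] ascents_before_Suc[of s \<beta>] by auto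
  qed
  have "b s - ascents_before \<beta> s < k" if "s \<in> {1..n}" for s
  proof -
    have "n \<in> {1..n}"
      using that by simp
    then have "b n < k + ascents_before \<beta> n" "ascents_before \<beta> n \<le> b n"
      using b ge[of n] by (auto simp: increasing_words_def)
    moreover have "b s - ascents_before \<beta> s \<le> b n - ascents_before \<beta> n"
      using stepwise_trans[of n "(\<le>)" "\<lambda>s. b s - ascents_before \<beta> s" s n] step that
      by (cases "s = n") (auto simp: stepwise_def)
    ultimately show ?thesis by linarith
  qed
  then show ?thesis
    using step by (auto simp: descent_strict_words_def)
qed

lemma enriched_count_all_plus:
  assumes \<beta>: "\<beta> permutes {1..n}"
  shows "enriched_count n \<beta> k (\<lambda>_. True) = (k + ascents_before \<beta> n) choose n"
proof -
  have "bij_betw (\<lambda>a. restrict (\<lambda>s. a s + ascents_before \<beta> s) {1..n})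
    (descent_strict_words n \<beta> k) (increasing_words n (k + ascents_before \<beta> n))"
  proof (rule bij_betwI[where g = "\<lambda>b. restrict (\<lambda>s. b s - ascents_before \<beta> s) {1..n}"])
    show "restrict (\<lambda>s. restrict (\<lambda>s. a s + ascents_before \<beta> s) {1..n} s - ascents_before \<beta> s) {1..n} = a"
      if "a \<in> descent_strict_words n \<beta> k" for a
      using that by (auto simp: descent_strict_words_def PiE_iff extensional_def)
    show "restrict (\<lambda>s. restrict (\<lambda>s. b s - ascents_before \<beta> s) {1..n} s + ascents_before \<beta> s) {1..n} = b"
      if "b \<in> increasing_words n (k + ascents_before \<beta> n)" for b
      using that ascents_before_le[OF that, of _ \<beta>]
      by (auto simp: increasing_words_def PiE_iff extensional_def)
  qed (use add_ascents_in_increasing_words[OF \<beta>] sub_ascents_in_descent_strict_words in auto)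
  then show ?thesis
    by (simp add: enriched_count_all_plus_eq_card bij_betw_same_card card_increasing_words)
qed

definition binomial_poly :: "nat \<Rightarrow> nat \<Rightarrow> 'a::field_char_0 poly" where
  "binomial_poly c n = smult (1 / fact n) (\<Prod>i<n. [:of_nat c - of_nat i, 1:])"

lemma poly_binomial_poly: "poly (binomial_poly c n) (of_nat k) = (of_nat ((k + c) choose n) :: 'a::field_char_0)"
proof -
  have "(of_nat ((k + c) choose n) :: 'a) = of_nat (k + c) gchoose n"
    by (rule binomial_gbinomial)
  also have "\<dots> = (\<Prod>i<n. of_nat (k + c) - of_nat i) / fact n"
    by (simp add: gbinomial_prod_rev atLeast0LessThan)
  also have "\<dots> = poly (binomial_poly c n) (of_nat k)"
    by (simp add: binomial_poly_def poly_prod algebra_simps)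
  finally show ?thesis by simp
qed

lemma enriched_count_polynomial:
  assumes \<sigma>: "\<sigma> permutes {1..n}" and t: "t \<in> {odd, even}"
  shows "\<exists>p. \<forall>k\<ge>1. poly p (of_nat k) = (of_nat (enriched_count n \<sigma> (2 * k) t) :: 'a::field_char_0)"
proof
  let ?P = "{p. p permutes {1..n}}"
  show "\<forall>k\<ge>1. poly (\<Sum>\<alpha>\<in>?P. smult (of_nat (enriched_count n \<alpha> 2 t))
      (binomial_poly (ascents_before (inv \<alpha> \<circ> \<sigma>) n) n)) (of_nat k)
    = (of_nat (enriched_count n \<sigma> (2 * k) t) :: 'a)"
  proof (intro allI impI)
    fix k :: nat assume "k \<ge> 1"
    \<comment> \<open>An alternately typed alphabet of size 2 k is the product of one of size 2 with an
      all-plus alphabet of size k.\<close>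
    have "enriched_count n \<sigma> (2 * k) t = (\<Sum>\<alpha>\<in>?P. \<Sum>\<beta>\<in>?P.
        if \<alpha> \<circ> \<beta> = \<sigma> then enriched_count n \<alpha> 2 t * enriched_count n \<beta> k (\<lambda>_. True) else 0)"
      using convolution_enriched_count[OF _ _ \<sigma>, of 2 k t "\<lambda>_. True" t] twisted_pair_parity[OF t, of _ 1]
      by simp
    also have "\<dots> = (\<Sum>\<alpha>\<in>?P. enriched_count n \<alpha> 2 t * ((k + ascents_before (inv \<alpha> \<circ> \<sigma>) n) choose n))"
      unfolding sum_compose_eq_perm[OF finite_atLeastAtMost \<sigma>]
      using permutes_compose[OF \<sigma> permutes_inv]
      by (intro sum.cong refl) (simp add: enriched_count_all_plus)
    finally show "poly (\<Sum>\<alpha>\<in>?P. smult (of_nat (enriched_count n \<alpha> 2 t))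
      (binomial_poly (ascents_before (inv \<alpha> \<circ> \<sigma>) n) n)) (of_nat k)
      = (of_nat (enriched_count n \<sigma> (2 * k) t) :: 'a)"
      by (simp add: poly_sum poly_binomial_poly)
  qed
qed

definition enriched_poly :: "nat \<Rightarrow> (nat \<Rightarrow> bool) \<Rightarrow> (nat \<Rightarrow> nat) \<Rightarrow> rat poly" where
  "enriched_poly n t \<pi> =
     (THE p. \<forall>k::nat. k \<ge> 1 \<longrightarrow> poly p (of_nat k) = of_nat (enriched_count n \<pi> (2 * k) t))"

lemma poly_enriched_poly:
  assumes "\<pi> permutes {1..n}" "t \<in> {odd, even}" "k \<ge> 1"
  shows "poly (enriched_poly n t \<pi>) (of_nat k) = of_nat (enriched_count n \<pi> (2 * k) t)"
proof -
  have "\<exists>!p. \<forall>k::nat. k \<ge> 1 \<longrightarrow> poly p (of_nat k) = (of_nat (enriched_count n \<pi> (2 * k) t) :: rat)"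
    using enriched_count_polynomial[OF assms(1,2)] poly_eqI_positive_nats by (metis (no_types, lifting))
  from theI'[OF this] show ?thesis
    using assms(3) unfolding enriched_poly_def by blast
qed

lemma enriched_order_poly_eq: "enriched_order_poly n \<pi> = enriched_poly n odd \<pi>"
  unfolding enriched_order_poly_def enriched_order_def enriched_poly_def by (rule refl)

lemma ext_enriched_order_poly_eq: "ext_enriched_order_poly n \<pi> = enriched_poly n even \<pi>"
  unfolding ext_enriched_order_poly_def ext_enriched_order_def enriched_poly_def by (rule refl)

section \<open>Multiplicativity\<close>

definition enriched_series :: "nat \<Rightarrow> (nat \<Rightarrow> bool) \<Rightarrow> rat \<Rightarrow> (nat \<Rightarrow> nat) \<Rightarrow> rat" where
  "enriched_series n t x = (\<lambda>\<pi>. if \<pi> permutes {1..n} then poly (enriched_poly n t \<pi>) (x / 2) else 0)"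

lemma rho_eq_enriched_series: "rho n x = enriched_series n odd x"
  unfolding rho_def enriched_series_def enriched_order_poly_eq by (rule refl)

lemma rho_bar_eq_enriched_series: "rho_bar n x = enriched_series n even x"
  unfolding rho_bar_def enriched_series_def ext_enriched_order_poly_eq by (rule refl)

lemma ga_mult_eq_sum:
  assumes "\<sigma> permutes {1..n}"
  shows "ga_mult n f g \<sigma> = (\<Sum>\<alpha>\<in>{p. p permutes {1..n}}. f \<alpha> * g (inv \<alpha> \<circ> \<sigma>))"
  unfolding ga_mult_def using sum_compose_eq_perm[OF finite_atLeastAtMost assms] by simp

lemma ga_mult_not_perm:
  assumes "\<not> \<sigma> permutes {1..n}"
  shows "ga_mult n f g \<sigma> = 0"
proof -
  have "\<alpha> \<circ> \<beta> \<noteq> \<sigma>" if "\<alpha> permutes {1..n}" "\<beta> permutes {1..n}" for \<alpha> \<beta>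
    using assms permutes_compose[OF that(2,1)] by auto
  then show ?thesis
    unfolding ga_mult_def by (intro sum.neutral ballI) auto
qed

lemma enriched_poly_convolution:
  assumes t1: "t1 \<in> {odd, even}" and t2: "t2 \<in> {odd, even}" and \<sigma>: "\<sigma> permutes {1..n}"
    and "k \<ge> 1" "l \<ge> 1"
  shows "(\<Sum>\<alpha>\<in>{p. p permutes {1..n}}.
      poly (enriched_poly n t1 \<alpha>) (of_nat k) * poly (enriched_poly n t2 (inv \<alpha> \<circ> \<sigma>)) (of_nat l))
    = poly (enriched_poly n t1 \<sigma>) (of_nat (2 * k * l))"
proof -
  let ?P = "{p. p permutes {1..n}}"
  have "0 < 2 * k"
    using assms(4) by simp
  moreover have "t1 (twisted_pair (2 * k) t2 a b) \<longleftrightarrow> (t1 a \<longleftrightarrow> t2 b)" if "a < 2 * k" "b < 2 * l" for a b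
    using twisted_pair_parity[OF t1 that(1)] .
  ultimately have "(\<Sum>\<alpha>\<in>?P. enriched_count n \<alpha> (2 * k) t1 * enriched_count n (inv \<alpha> \<circ> \<sigma>) (2 * l) t2)
      = enriched_count n \<sigma> (2 * (2 * k * l)) t1"
    using convolution_enriched_count[OF _ _ \<sigma>, of "2 * k" "2 * l" t1 t2 t1]
    unfolding sum_compose_eq_perm[OF finite_atLeastAtMost \<sigma>] by (simp add: ac_simps)
  then have "(of_nat (\<Sum>\<alpha>\<in>?P. enriched_count n \<alpha> (2 * k) t1 * enriched_count n (inv \<alpha> \<circ> \<sigma>) (2 * l) t2) :: rat)
      = of_nat (enriched_count n \<sigma> (2 * (2 * k * l)) t1)"
    by (rule arg_cong)
  then show ?thesis
    using assms permutes_compose[OF \<sigma> permutes_inv] poly_enriched_poly[OF _ t1] poly_enriched_poly[OF _ t2]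
      poly_enriched_poly[OF \<sigma> t1, of "2 * k * l"]
    by (simp add: of_nat_sum)
qed

lemma ga_mult_enriched_series:
  assumes t1: "t1 \<in> {odd, even}" and t2: "t2 \<in> {odd, even}"
  shows "ga_mult n (enriched_series n t1 x) (enriched_series n t2 y) = enriched_series n t1 (x * y)"
proof
  fix \<sigma>
  show "ga_mult n (enriched_series n t1 x) (enriched_series n t2 y) \<sigma> = enriched_series n t1 (x * y) \<sigma>"
  proof (cases "\<sigma> permutes {1..n}")
    case False
    then show ?thesis by (simp add: ga_mult_not_perm enriched_series_def)
  next
    case \<sigma>: True
    define F where "F x y = (\<Sum>\<alpha>\<in>{p. p permutes {1..n}}. poly (enriched_poly n t1 \<alpha>) (x / 2) *
        poly (enriched_poly n t2 (inv \<alpha> \<circ> \<sigma>)) (y / 2)) - poly (enriched_poly n t1 \<sigma>) (x * y / 2)"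
      for x y :: rat
    have "F x y = 0"
    proof (rule poly_fun_eq_0_separately[where F = F])
      show "poly_fun (\<lambda>x. F x y)" "poly_fun (\<lambda>y. F x y)" for x y
        unfolding F_def
        by (intro poly_fun_diff poly_fun_sum poly_fun_mult poly_fun_poly_comp poly_fun_divide
            poly_fun_id poly_fun_const)+
      show "F x y = 0" if "x \<in> (\<lambda>k. of_nat (2 * k)) ` {1..}" "y \<in> (\<lambda>k. of_nat (2 * k)) ` {1..}" for x y
        using that enriched_poly_convolution[OF t1 t2 \<sigma>] by (auto simp: F_def ac_simps)
    qed (use infinite_of_nat_multiples[of 2] in auto)
    then show ?thesis
      using \<sigma> permutes_compose[OF \<sigma> permutes_inv]
      by (simp add: F_def ga_mult_eq_sum enriched_series_def)
  qed
qed

theorem theorem3p1: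
  fixes n :: nat
  assumes "n \<ge> 1"
  shows "\<forall>x y :: rat.
           ga_mult n (rho n x) (rho n y) = rho n (x * y) \<and>
           ga_mult n (rho_bar n x) (rho_bar n y) = rho_bar n (x * y) \<and>
           ga_mult n (rho_bar n x) (rho n y) = rho_bar n (x * y) \<and>
           ga_mult n (rho n x) (rho_bar n y) = rho n (x * y)"
  by (simp add: rho_eq_enriched_series rho_bar_eq_enriched_series ga_mult_enriched_series)

end
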